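(* Let $\ell,m,n\in\mathbb{N}_0$ with $m+n\ge1$ and $k=\ell+m\ge1$, and fix a word pattern of $N=\ell+m+n$ letters from $\{M,S,T\}$ with exactly $\ell$ letters $M$, $m$ letters $S$, $n$ letters $T$. Then there exist integers $a_j,b_j$ ($j=1,\dots,k$), depending only on the pattern and not on $g$, such that for every $g\in\mathcal{H}(\mathbb{D})$ the corresponding $g$-word $L\in W_g(\ell,m,n)$ satisfies $$L=(1-\delta_L)S_g^kT_g^n+\delta_LS_g^kT_g^n\Pi_0+\sum_{j=1}^ka_jS_g^{k-j}T_g^{n+j}+\sum_{j=1}^kb_jS_g^{k-j}T_g^{n+j}\Pi_0,$$ where $\delta_L=0$ if $L$ ends in $T_gM_g^i$ for some $i\in\mathbb{N}_0$ and $\delta_L=1$ if $L$ ends in $S_gM_g^i$ for some $i\in\mathbb{N}_0$. In particular, there are integers $c_j$ independent of $g$ with $$L=S_g^kT_g^n+\sum_{j=1}^kc_jS_g^{k-j}T_g^{n+j}\quad\text{on }\mathcal{H}_0(\mathbb{D}).$$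
   Context: $\mathcal{H}(\mathbb{D})$ is the space of analytic functions on the unit disc, $\mathcal{H}_0(\mathbb{D})=\{f\in\mathcal{H}(\mathbb{D}):f(0)=0\}$, and $\Pi_0f=f-f(0)$. For $g\in\mathcal{H}(\mathbb{D})$: $M_gf=gf$, $T_gf(z)=\int_0^zf(\zeta)g'(\zeta)d\zeta$, $S_gf(z)=\int_0^zf'(\zeta)g(\zeta)d\zeta$; $S_g^0,T_g^0$ are the identity. $W_g(\ell,m,n)$ is the set of products $L_1\cdots L_N$ with each $L_j\in\{M_g,S_g,T_g\}$ and exactly $\ell$, $m$, $n$ factors equal to $M_g,S_g,T_g$ respectively. "$L$ ends in $T_gM_g^i$" means $L=L'T_gM_g^i$ for some (possibly empty) word $L'$. *)

theory Defs
  imports "HOL-Complex_Analysis.Complex_Analysis"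
begin

text \<open>Functions on the unit disc are modelled as total functions complex \<Rightarrow> complex;
  only their values on the open unit disc (ball 0 1) matter.\<close>

definition Mop :: "(complex \<Rightarrow> complex) \<Rightarrow> (complex \<Rightarrow> complex) \<Rightarrow> (complex \<Rightarrow> complex)" where
  "Mop g f = (\<lambda>z. g z * f z)"

definition Top :: "(complex \<Rightarrow> complex) \<Rightarrow> (complex \<Rightarrow> complex) \<Rightarrow> (complex \<Rightarrow> complex)" where
  "Top g f = (\<lambda>z. contour_integral (linepath 0 z) (\<lambda>w. f w * deriv g w))"

definition Sop :: "(complex \<Rightarrow> complex) \<Rightarrow> (complex \<Rightarrow> complex) \<Rightarrow> (complex \<Rightarrow> complex)" where
  "Sop g f = (\<lambda>z. contour_integral (linepath 0 z) (\<lambda>w. deriv f w * g w))"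

definition Pi0 :: "(complex \<Rightarrow> complex) \<Rightarrow> (complex \<Rightarrow> complex)" where
  "Pi0 f = (\<lambda>z. f z - f 0)"

datatype letter = LM | LS | LT

fun letter_op :: "(complex \<Rightarrow> complex) \<Rightarrow> letter \<Rightarrow> (complex \<Rightarrow> complex) \<Rightarrow> (complex \<Rightarrow> complex)" where
  "letter_op g LM = Mop g"
| "letter_op g LS = Sop g"
| "letter_op g LT = Top g"

fun word_op :: "(complex \<Rightarrow> complex) \<Rightarrow> letter list \<Rightarrow> (complex \<Rightarrow> complex) \<Rightarrow> (complex \<Rightarrow> complex)" where
  "word_op g [] = id"
| "word_op g (x # xs) = letter_op g x \<circ> word_op g xs"

definition count_letter :: "letter \<Rightarrow> letter list \<Rightarrow> nat" where
  "count_letter c w = length (filter (\<lambda>x. x = c) w)"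

definition ends_in_S :: "letter list \<Rightarrow> bool" where
  "ends_in_S w \<longleftrightarrow> (\<exists>w' i. w = w' @ [LS] @ replicate i LM)"

definition ends_in_T :: "letter list \<Rightarrow> bool" where
  "ends_in_T w \<longleftrightarrow> (\<exists>w' i. w = w' @ [LT] @ replicate i LM)"

end

theory Submission
  imports Defs
begin

text \<open>On functions vanishing at 0 the product rule gives M = S + T and T S = (S - T) T, hence
  T^d S = S T^d - d T^(d+1). Multiplying a sum of terms c_d S^(N-d) T^d on the right by any letter
  therefore gives a sum of the same shape, with integer coefficients computed symbolically, and
  the coefficient of the lowest power of T, i.e. of S^k T^n, stays 1. For an arbitrary f only
  the last letter other than M matters: T M^i = S^i T and S M^i = S^(i+1) Pi_0 + i S^i T hold on
  all holomorphic functions, and after them every operand vanishes at 0.\<close>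

lemma count_letter_Nil [simp]: "count_letter a [] = 0"
  by (simp add: count_letter_def)

lemma count_letter_Cons [simp]:
  "count_letter a (x # w) = (if x = a then 1 else 0) + count_letter a w"
  by (simp add: count_letter_def)

lemma count_letter_append [simp]: "count_letter a (v @ w) = count_letter a v + count_letter a w"
  by (simp add: count_letter_def)

lemma count_letter_replicate [simp]: "count_letter a (replicate i x) = (if x = a then i else 0)"
  by (induction i) simp_all

lemma count_letter_eq_0_iff: "count_letter a w = 0 \<longleftrightarrow> a \<notin> set w"
  by (induction w) auto

lemma length_eq_count_letters:
  "length w = count_letter LM w + count_letter LS w + count_letter LT w"
proof (induction w)
  case (Cons x w)
  then show ?case
    by (cases x) simp_all
qed simp

lemma split_last_non_LM:
  assumes "x \<in> set w" and "x \<noteq> LM"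
  obtains v y i where "y \<noteq> LM" and "w = v @ [y] @ replicate i LM"
  using assms
proof (induction w arbitrary: thesis rule: rev_induct)
  case (snoc x' w)
  show ?case
  proof (cases "x' = LM")
    case True
    then obtain v y i where "y \<noteq> LM" and "w = v @ [y] @ replicate i LM"
      using snoc.IH snoc.prems(2,3) by auto
    then show ?thesis
      using True snoc.prems(1)[of y v "Suc i"] by (simp add: replicate_append_same[symmetric])
  next
    case False
    then show ?thesis
      using snoc.prems(1)[of x' w 0] by simp
  qed
qed simp

lemma last_non_LM_unique:
  assumes "y \<noteq> LM" and "y' \<noteq> LM" and "v @ [y] @ replicate i LM = v' @ [y'] @ replicate i' LM"
  shows "y = y'"
proof -
  have "dropWhile (\<lambda>x. x = LM) (replicate j LM @ x # u) = x # u" if "x \<noteq> LM" for u x j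
    using that by (induction j) simp_all
  then show ?thesis
    using arg_cong[OF assms(3), of "\<lambda>w. dropWhile (\<lambda>x. x = LM) (rev w)"] assms(1,2) by simp
qed

lemma ends_in_T_iff: "y \<noteq> LM \<Longrightarrow> ends_in_T (v @ [y] @ replicate i LM) \<longleftrightarrow> y = LT"
  unfolding ends_in_T_def using last_non_LM_unique[of y LT] by blast

lemma ends_in_S_iff: "y \<noteq> LM \<Longrightarrow> ends_in_S (v @ [y] @ replicate i LM) \<longleftrightarrow> y = LS"
  unfolding ends_in_S_def using last_non_LM_unique[of y LS] by blast

definition st_sum ::
    "(complex \<Rightarrow> complex) \<Rightarrow> nat \<Rightarrow> (nat \<Rightarrow> int) \<Rightarrow> (complex \<Rightarrow> complex) \<Rightarrow> complex \<Rightarrow> complex"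
  where "st_sum g N c f z = (\<Sum>d\<le>N. of_int (c d) * (Sop g ^^ (N - d)) ((Top g ^^ d) f) z)"

lemma st_sum_add: "st_sum g N (\<lambda>d. c d + c' d) f z = st_sum g N c f z + st_sum g N c' f z"
  by (simp add: st_sum_def distrib_right sum.distrib)

lemma st_sum_split:
  assumes "\<And>d. d < n \<Longrightarrow> c d = 0"
  shows "st_sum g (k + n) c f z = of_int (c n) * (Sop g ^^ k) ((Top g ^^ n) f) z
    + (\<Sum>j=1..k. of_int (c (n + j)) * (Sop g ^^ (k - j)) ((Top g ^^ (n + j)) f) z)"
proof -
  have "st_sum g (k + n) c f z
      = (\<Sum>d=0 + n..k + n. of_int (c d) * (Sop g ^^ (k + n - d)) ((Top g ^^ d) f) z)"
    unfolding st_sum_def by (rule sum.mono_neutral_cong_right) (use assms in auto)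
  also have "\<dots> = (\<Sum>j=0..k.
      of_int (c (j + n)) * (Sop g ^^ (k + n - (j + n))) ((Top g ^^ (j + n)) f) z)"
    by (rule sum.shift_bounds_cl_nat_ivl)
  also have "\<dots> = (\<Sum>j=0..k. of_int (c (n + j)) * (Sop g ^^ (k - j)) ((Top g ^^ (n + j)) f) z)"
    by (simp add: add.commute)
  also have "\<dots> = of_int (c n) * (Sop g ^^ k) ((Top g ^^ n) f) z
      + (\<Sum>j=1..k. of_int (c (n + j)) * (Sop g ^^ (k - j)) ((Top g ^^ (n + j)) f) z)"
    by (simp add: sum.atLeast_Suc_atMost)
  finally show ?thesis .
qed

text \<open>If the operator \<^term>\<open>\<lambda>f. st_sum g N c f\<close> is multiplied on the right by the
  letter x, the coefficients of the result are \<^term>\<open>coeffs_times c x\<close>: the case LS comes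
  from T^d S = S T^d - d T^(d+1), the case LM from M = S + T (on functions vanishing at 0).\<close>

fun coeffs_times :: "(nat \<Rightarrow> int) \<Rightarrow> letter \<Rightarrow> nat \<Rightarrow> int" where
  "coeffs_times c LT d = (case d of 0 \<Rightarrow> 0 | Suc e \<Rightarrow> c e)"
| "coeffs_times c LS d = c d - (case d of 0 \<Rightarrow> 0 | Suc e \<Rightarrow> int e * c e)"
| "coeffs_times c LM d = c d + (case d of 0 \<Rightarrow> 0 | Suc e \<Rightarrow> c e - int e * c e)"

lemma coeffs_times_LM: "coeffs_times c LM = (\<lambda>d. coeffs_times c LS d + coeffs_times c LT d)"
  by (rule ext) (simp split: nat.split)

definition st_coeffs :: "letter list \<Rightarrow> nat \<Rightarrow> int" where
  "st_coeffs w = foldl coeffs_times (\<lambda>d. if d = 0 then 1 else 0) w"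

lemma st_coeffs_Nil: "st_coeffs [] d = (if d = 0 then 1 else 0)"
  by (simp add: st_coeffs_def)

lemma st_coeffs_snoc: "st_coeffs (w @ [x]) = coeffs_times (st_coeffs w) x"
  by (simp add: st_coeffs_def)

lemma st_coeffs_above_length: "length w < d \<Longrightarrow> st_coeffs w d = 0"
proof (induction w arbitrary: d rule: rev_induct)
  case (snoc x w)
  then show ?case
    by (cases x) (simp_all add: st_coeffs_snoc split: nat.split)
qed (simp add: st_coeffs_Nil)

lemma st_coeffs_below_count_LT: "d < count_letter LT w \<Longrightarrow> st_coeffs w d = 0"
proof (induction w arbitrary: d rule: rev_induct)
  case (snoc x w)
  then show ?case
    by (cases x) (simp_all add: st_coeffs_snoc split: nat.split)
qed simp

lemma st_coeffs_at_count_LT: "st_coeffs w (count_letter LT w) = 1"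
proof (induction w rule: rev_induct)
  case (snoc x w)
  then show ?case
    by (cases x) (simp_all add: st_coeffs_snoc st_coeffs_below_count_LT split: nat.split)
qed (simp add: st_coeffs_Nil)

lemma Top_at_0 [simp]: "Top g F 0 = 0"
  by (simp add: Top_def)

lemma Sop_at_0 [simp]: "Sop g F 0 = 0"
  by (simp add: Sop_def)

lemma word_op_append: "word_op g (v @ w) = word_op g v \<circ> word_op g w"
  by (induction v) auto

lemma word_op_replicate [simp]: "word_op g (replicate i x) = letter_op g x ^^ i"
  by (induction i) auto

lemma Pi0_holomorphic: "h holomorphic_on D \<Longrightarrow> Pi0 h holomorphic_on D"
  unfolding Pi0_def by (intro holomorphic_on_diff holomorphic_on_const)

locale integration_operators =
  fixes D :: "complex set" and g :: "complex \<Rightarrow> complex"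
  assumes open_D: "open D" and convex_D: "convex D" and zero_in_D: "0 \<in> D"
    and holomorphic_g: "g holomorphic_on D"
begin

lemma contour_integral_linepath_0_eq:
  assumes H: "\<And>w. w \<in> D \<Longrightarrow> (H has_field_derivative h w) (at w)" and z: "z \<in> D"
  shows "contour_integral (linepath 0 z) h = H z - H 0"
proof -
  have "closed_segment 0 z \<subseteq> D"
    using convex_D zero_in_D z by (simp add: closed_segment_subset)
  moreover have "\<And>w. w \<in> D \<Longrightarrow> (H has_field_derivative h w) (at w within D)"
    using H by (rule has_field_derivative_at_within)
  ultimately have "(h has_contour_integral H z - H 0) (linepath 0 z)"
    using contour_integral_primitive[of D H h "linepath 0 z"] by simp
  then show ?thesis
    by (rule contour_integral_unique)
qed

lemma has_field_derivative_contour_integral_linepath_0: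
  assumes h: "h holomorphic_on D" and w: "w \<in> D"
  shows "((\<lambda>z. contour_integral (linepath 0 z) h) has_field_derivative h w) (at w)"
proof -
  obtain H where H_within: "\<And>x. x \<in> D \<Longrightarrow> (H has_field_derivative h x) (at x within D)"
    using holomorphic_convex_primitive'[OF convex_D open_D h] by blast
  have H: "(H has_field_derivative h x) (at x)" if "x \<in> D" for x
    using H_within[OF that] at_within_open[OF that open_D] by simp
  have "((\<lambda>z. H z - H 0) has_field_derivative h w) (at w)"
    using DERIV_diff[OF H[OF w] DERIV_const[of "H 0"]] by simp
  then show ?thesis
    by (rule has_field_derivative_transform_within_open[OF _ open_D w])
       (simp add: contour_integral_linepath_0_eq[OF H])
qed

lemma Top_has_field_derivative:
  assumes "F holomorphic_on D" and "w \<in> D"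
  shows "(Top g F has_field_derivative F w * deriv g w) (at w)"
  unfolding Top_def
  by (rule has_field_derivative_contour_integral_linepath_0[OF holomorphic_on_mult assms(2)])
     (use assms(1) holomorphic_deriv[OF holomorphic_g open_D] in auto)

lemma Sop_has_field_derivative:
  assumes "F holomorphic_on D" and "w \<in> D"
  shows "(Sop g F has_field_derivative deriv F w * g w) (at w)"
  unfolding Sop_def
  by (rule has_field_derivative_contour_integral_linepath_0[OF holomorphic_on_mult assms(2)])
     (use holomorphic_deriv[OF assms(1) open_D] holomorphic_g in auto)

lemma Top_eqI:
  assumes "\<And>w. w \<in> D \<Longrightarrow> (H has_field_derivative F w * deriv g w) (at w)"
    and "H 0 = 0" and "z \<in> D"
  shows "Top g F z = H z"
  using contour_integral_linepath_0_eq[OF assms(1,3)] assms(2) by (simp add: Top_def)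

lemma Sop_eqI:
  assumes "\<And>w. w \<in> D \<Longrightarrow> (H has_field_derivative deriv F w * g w) (at w)"
    and "H 0 = 0" and "z \<in> D"
  shows "Sop g F z = H z"
  using contour_integral_linepath_0_eq[OF assms(1,3)] assms(2) by (simp add: Sop_def)

lemma Top_holomorphic: "F holomorphic_on D \<Longrightarrow> Top g F holomorphic_on D"
  using Top_has_field_derivative holomorphic_on_open[OF open_D] by blast

lemma Sop_holomorphic: "F holomorphic_on D \<Longrightarrow> Sop g F holomorphic_on D"
  using Sop_has_field_derivative holomorphic_on_open[OF open_D] by blast

lemma Mop_holomorphic: "F holomorphic_on D \<Longrightarrow> Mop g F holomorphic_on D"
  unfolding Mop_def using holomorphic_g by (rule holomorphic_on_mult)

lemma letter_op_holomorphic: "F holomorphic_on D \<Longrightarrow> letter_op g x F holomorphic_on D"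
  by (cases x) (simp_all add: Mop_holomorphic Sop_holomorphic Top_holomorphic)

lemma word_op_holomorphic: "F holomorphic_on D \<Longrightarrow> word_op g w F holomorphic_on D"
  by (induction w) (simp_all add: letter_op_holomorphic)

lemma funpow_holomorphic:
  assumes "F holomorphic_on D"
  shows "(Mop g ^^ i) F holomorphic_on D" and "(Sop g ^^ i) F holomorphic_on D"
    and "(Top g ^^ i) F holomorphic_on D"
  using word_op_holomorphic[OF assms, of "replicate i LM"]
    word_op_holomorphic[OF assms, of "replicate i LS"]
    word_op_holomorphic[OF assms, of "replicate i LT"]
  by simp_all

lemma Top_cong:
  assumes "\<And>w. w \<in> D \<Longrightarrow> F w = F' w" and z: "z \<in> D"
  shows "Top g F z = Top g F' z"
proof -
  have "closed_segment 0 z \<subseteq> D"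
    using convex_D zero_in_D z by (simp add: closed_segment_subset)
  then show ?thesis
    unfolding Top_def using assms(1) by (intro contour_integral_eq) auto
qed

lemma Sop_cong:
  assumes "\<And>w. w \<in> D \<Longrightarrow> F w = F' w" and z: "z \<in> D"
  shows "Sop g F z = Sop g F' z"
proof -
  have "closed_segment 0 z \<subseteq> D"
    using convex_D zero_in_D z by (simp add: closed_segment_subset)
  moreover have "deriv F w = deriv F' w" if "w \<in> D" for w
  proof -
    have "eventually (\<lambda>y. y \<in> D) (nhds w)"
      using open_D that by (rule eventually_nhds_in_open)
    then have "eventually (\<lambda>y. F y = F' y) (nhds w)"
      by (rule eventually_mono) (rule assms(1))
    then show ?thesis
      by (rule deriv_cong_ev) simp
  qed
  ultimately show ?thesis
    unfolding Sop_def by (intro contour_integral_eq) auto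
qed

lemma letter_op_cong:
  assumes "\<And>y. y \<in> D \<Longrightarrow> F y = F' y" and "z \<in> D"
  shows "letter_op g x F z = letter_op g x F' z"
  by (cases x) (simp_all add: Mop_def assms Sop_cong[OF assms] Top_cong[OF assms])

lemma word_op_cong:
  assumes "\<And>y. y \<in> D \<Longrightarrow> F y = F' y" and "z \<in> D"
  shows "word_op g w F z = word_op g w F' z"
  using assms(2)
proof (induction w arbitrary: z)
  case (Cons x w)
  then show ?case
    using letter_op_cong[of "word_op g w F" "word_op g w F'" z x] by simp
qed (simp add: assms(1))

lemma Top_lincomb:
  assumes A: "A holomorphic_on D" and B: "B holomorphic_on D" and z: "z \<in> D"
  shows "Top g (\<lambda>y. a * A y + b * B y) z = a * Top g A z + b * Top g B z"
proof (rule Top_eqI[OF _ _ z])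
  fix y assume y: "y \<in> D"
  show "((\<lambda>z. a * Top g A z + b * Top g B z)
      has_field_derivative (a * A y + b * B y) * deriv g y) (at y)"
    using DERIV_add[OF DERIV_cmult[OF Top_has_field_derivative[OF A y]]
        DERIV_cmult[OF Top_has_field_derivative[OF B y]]]
    by (simp add: algebra_simps)
qed simp

lemma Sop_lincomb:
  assumes A: "A holomorphic_on D" and B: "B holomorphic_on D" and z: "z \<in> D"
  shows "Sop g (\<lambda>y. a * A y + b * B y) z = a * Sop g A z + b * Sop g B z"
proof (rule Sop_eqI[OF _ _ z])
  fix y assume y: "y \<in> D"
  have "((\<lambda>y. a * A y + b * B y) has_field_derivative a * deriv A y + b * deriv B y) (at y)"
    by (intro DERIV_add DERIV_cmult holomorphic_derivI[OF A open_D y]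
        holomorphic_derivI[OF B open_D y])
  then show "((\<lambda>z. a * Sop g A z + b * Sop g B z) has_field_derivative
      deriv (\<lambda>y. a * A y + b * B y) y * g y) (at y)"
    using DERIV_add[OF DERIV_cmult[OF Sop_has_field_derivative[OF A y]]
        DERIV_cmult[OF Sop_has_field_derivative[OF B y]]]
    by (simp add: DERIV_imp_deriv algebra_simps)
qed simp

lemma letter_op_lincomb:
  assumes "A holomorphic_on D" and "B holomorphic_on D" and "z \<in> D"
  shows "letter_op g x (\<lambda>y. a * A y + b * B y) z = a * letter_op g x A z + b * letter_op g x B z"
  by (cases x) (simp_all add: Mop_def algebra_simps Sop_lincomb[OF assms] Top_lincomb[OF assms])

lemma word_op_lincomb:
  assumes A: "A holomorphic_on D" and B: "B holomorphic_on D" and z: "z \<in> D"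
  shows "word_op g w (\<lambda>y. a * A y + b * B y) z = a * word_op g w A z + b * word_op g w B z"
  using z
proof (induction w arbitrary: z)
  case (Cons x w)
  have "word_op g (x # w) (\<lambda>y. a * A y + b * B y) z
      = letter_op g x (\<lambda>y. a * word_op g w A y + b * word_op g w B y) z"
    using letter_op_cong[OF Cons.IH Cons.prems] by simp
  also have "\<dots> = a * word_op g (x # w) A z + b * word_op g (x # w) B z"
    using letter_op_lincomb[OF word_op_holomorphic[OF A] word_op_holomorphic[OF B] Cons.prems]
    by simp
  finally show ?case .
qed simp

lemma Sop_add_Top:
  assumes h: "h holomorphic_on D" and z: "z \<in> D"
  shows "Sop g h z + Top g h z = g z * h z - g 0 * h 0"
proof -
  have "Sop g h z = g z * h z - g 0 * h 0 - Top g h z"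
  proof (rule Sop_eqI[OF _ _ z])
    fix y assume y: "y \<in> D"
    have "((\<lambda>y. g y * h y - g 0 * h 0 - Top g h y) has_field_derivative
        g y * deriv h y + deriv g y * h y - 0 - h y * deriv g y) (at y)"
      by (intro DERIV_diff DERIV_mult' DERIV_const holomorphic_derivI[OF holomorphic_g open_D y]
          holomorphic_derivI[OF h open_D y] Top_has_field_derivative[OF h y])
    then show "((\<lambda>y. g y * h y - g 0 * h 0 - Top g h y)
        has_field_derivative deriv h y * g y) (at y)"
      by (simp add: algebra_simps)
  qed simp
  then show ?thesis
    by simp
qed

lemma Mop_eq_Sop_add_Top:
  assumes "Y holomorphic_on D" and "Y 0 = 0" and "z \<in> D"
  shows "Mop g Y z = Sop g Y z + Top g Y z"
  using Sop_add_Top[OF assms(1,3)] assms(2) by (simp add: Mop_def)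

lemma Sop_Pi0:
  assumes h: "h holomorphic_on D" and z: "z \<in> D"
  shows "Sop g (Pi0 h) z = Sop g h z"
proof (rule Sop_eqI[OF _ _ z])
  fix y assume y: "y \<in> D"
  have "(Pi0 h has_field_derivative deriv h y - 0) (at y)"
    unfolding Pi0_def by (intro DERIV_diff DERIV_const holomorphic_derivI[OF h open_D y])
  then show "(Sop g h has_field_derivative deriv (Pi0 h) y * g y) (at y)"
    using Sop_has_field_derivative[OF h y] by (simp add: DERIV_imp_deriv)
qed simp

lemma Top_Mop:
  assumes h: "h holomorphic_on D" and z: "z \<in> D"
  shows "Top g (Mop g h) z = Sop g (Top g h) z"
proof -
  have "Sop g (Top g h) z = Top g (Mop g h) z"
  proof (rule Sop_eqI[OF _ _ z])
    fix y assume y: "y \<in> D"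
    show "(Top g (Mop g h) has_field_derivative deriv (Top g h) y * g y) (at y)"
      using Top_has_field_derivative[OF Mop_holomorphic[OF h] y]
        DERIV_imp_deriv[OF Top_has_field_derivative[OF h y]]
      by (simp add: Mop_def algebra_simps)
  qed simp
  then show ?thesis
    by simp
qed

lemma Sop_Mop:
  assumes h: "h holomorphic_on D" and z: "z \<in> D"
  shows "Sop g (Mop g h) z = Sop g (Sop g h) z + Sop g (Top g h) z"
proof -
  have "Sop g (Mop g h) z = Sop g (Pi0 (Mop g h)) z"
    using Sop_Pi0[OF Mop_holomorphic[OF h] z] by simp
  also have "\<dots> = Sop g (\<lambda>y. 1 * Sop g h y + 1 * Top g h y) z"
    by (rule Sop_cong[OF _ z]) (simp add: Pi0_def Mop_def Sop_add_Top[OF h])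
  also have "\<dots> = Sop g (Sop g h) z + Sop g (Top g h) z"
    using Sop_lincomb[OF Sop_holomorphic[OF h] Top_holomorphic[OF h] z, of 1 1] by simp
  finally show ?thesis .
qed

lemma Top_Sop:
  assumes Y: "Y holomorphic_on D" and Y0: "Y 0 = 0" and z: "z \<in> D"
  shows "Top g (Sop g Y) z = Sop g (Top g Y) z - Top g (Top g Y) z"
proof -
  have "Top g (Sop g Y) z = Top g (\<lambda>y. 1 * Mop g Y y + (- 1) * Top g Y y) z"
    by (rule Top_cong[OF _ z]) (simp add: Mop_eq_Sop_add_Top[OF Y Y0])
  also have "\<dots> = Top g (Mop g Y) z - Top g (Top g Y) z"
    using Top_lincomb[OF Mop_holomorphic[OF Y] Top_holomorphic[OF Y] z, of 1 "- 1"] by simp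
  finally show ?thesis
    by (simp add: Top_Mop[OF Y z])
qed

lemma funpow_Top_Sop:
  assumes Y: "Y holomorphic_on D" and Y0: "Y 0 = 0" and z: "z \<in> D"
  shows "(Top g ^^ j) (Sop g Y) z = Sop g ((Top g ^^ j) Y) z - of_nat j * (Top g ^^ Suc j) Y z"
  using z
proof (induction j arbitrary: z)
  case (Suc j)
  let ?Z = "(Top g ^^ j) Y"
  have Z: "?Z holomorphic_on D"
    by (rule funpow_holomorphic(3)[OF Y])
  have Z0: "?Z 0 = 0"
    using Y0 by (cases j) simp_all
  have "(Top g ^^ Suc j) (Sop g Y) z = Top g (\<lambda>y. 1 * Sop g ?Z y + (- of_nat j) * Top g ?Z y) z"
    by (simp, rule Top_cong[OF _ Suc.prems]) (simp add: Suc.IH)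
  also have "\<dots> = Top g (Sop g ?Z) z - of_nat j * Top g (Top g ?Z) z"
    using Top_lincomb[OF Sop_holomorphic[OF Z] Top_holomorphic[OF Z] Suc.prems, of 1 "- of_nat j"]
    by simp
  also have "\<dots> = Sop g (Top g ?Z) z - of_nat (Suc j) * Top g (Top g ?Z) z"
    by (simp add: Top_Sop[OF Z Z0 Suc.prems] algebra_simps)
  finally show ?case
    by simp
qed simp

lemma Top_funpow_Mop:
  assumes h: "h holomorphic_on D" and z: "z \<in> D"
  shows "Top g ((Mop g ^^ i) h) z = (Sop g ^^ i) (Top g h) z"
  using z
proof (induction i arbitrary: z)
  case (Suc i)
  have "Top g ((Mop g ^^ Suc i) h) z = Sop g (Top g ((Mop g ^^ i) h)) z"
    using Top_Mop[OF funpow_holomorphic(1)[OF h] Suc.prems] by simp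
  also have "\<dots> = Sop g ((Sop g ^^ i) (Top g h)) z"
    by (rule Sop_cong[OF Suc.IH Suc.prems])
  finally show ?case
    by simp
qed simp

lemma Sop_funpow_Mop:
  assumes h: "h holomorphic_on D" and z: "z \<in> D"
  shows "Sop g ((Mop g ^^ i) h) z
    = (Sop g ^^ Suc i) (Pi0 h) z + of_nat i * (Sop g ^^ i) (Top g h) z"
  using z
proof (induction i arbitrary: z)
  case 0
  then show ?case
    using Sop_Pi0[OF h] by simp
next
  case (Suc i)
  let ?H = "(Mop g ^^ i) h"
  have H: "?H holomorphic_on D"
    by (rule funpow_holomorphic(1)[OF h])
  have "Sop g ((Mop g ^^ Suc i) h) z = Sop g (Sop g ?H) z + Sop g (Top g ?H) z"
    using Sop_Mop[OF H Suc.prems] by simp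
  also have "Sop g (Sop g ?H) z
      = Sop g (\<lambda>y. 1 * (Sop g ^^ Suc i) (Pi0 h) y + of_nat i * (Sop g ^^ i) (Top g h) y) z"
    by (rule Sop_cong[OF _ Suc.prems]) (simp add: Suc.IH)
  also have "\<dots> = (Sop g ^^ Suc (Suc i)) (Pi0 h) z + of_nat i * (Sop g ^^ Suc i) (Top g h) z"
    using Sop_lincomb[OF funpow_holomorphic(2)[OF Pi0_holomorphic[OF h], where i = "Suc i"]
        funpow_holomorphic(2)[OF Top_holomorphic[OF h], where i = i] Suc.prems, of 1 "of_nat i"]
    by simp
  also have "Sop g (Top g ?H) z = (Sop g ^^ Suc i) (Top g h) z"
    using Sop_cong[OF Top_funpow_Mop[OF h] Suc.prems] by simp
  finally show ?case
    by (simp add: algebra_simps)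
qed

lemma st_normal_form_snoc_LT:
  assumes nf: "\<And>Y y. Y holomorphic_on D \<Longrightarrow> Y 0 = 0 \<Longrightarrow> y \<in> D \<Longrightarrow>
      word_op g w Y y = st_sum g (length w) (st_coeffs w) Y y"
    and F: "F holomorphic_on D" and z: "z \<in> D"
  shows "word_op g (w @ [LT]) F z = st_sum g (length (w @ [LT])) (st_coeffs (w @ [LT])) F z"
proof -
  have "word_op g (w @ [LT]) F z = st_sum g (length w) (st_coeffs w) (Top g F) z"
    using nf[OF Top_holomorphic[OF F] Top_at_0 z] by (simp add: word_op_append)
  also have "\<dots> = (\<Sum>d\<le>length w.
      of_int (st_coeffs w d) * (Sop g ^^ (length w - d)) ((Top g ^^ Suc d) F) z)"
    by (simp add: st_sum_def funpow_swap1)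
  also have "\<dots> = st_sum g (Suc (length w)) (coeffs_times (st_coeffs w) LT) F z"
    unfolding st_sum_def by (subst sum.atMost_Suc_shift) simp
  finally show ?thesis
    by (simp add: st_coeffs_snoc)
qed

lemma st_normal_form_snoc_LS:
  assumes nf: "\<And>Y y. Y holomorphic_on D \<Longrightarrow> Y 0 = 0 \<Longrightarrow> y \<in> D \<Longrightarrow>
      word_op g w Y y = st_sum g (length w) (st_coeffs w) Y y"
    and Y: "Y holomorphic_on D" and Y0: "Y 0 = 0" and z: "z \<in> D"
  shows "word_op g (w @ [LS]) Y z = st_sum g (length (w @ [LS])) (st_coeffs (w @ [LS])) Y z"
proof -
  define N where "N = length w"
  define c where "c = st_coeffs w"
  define X where "X a d = (Sop g ^^ a) ((Top g ^^ d) Y) z" for a d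
  have commute: "(Sop g ^^ (N - d)) ((Top g ^^ d) (Sop g Y)) z
      = X (Suc N - d) d - of_nat d * X (N - d) (Suc d)" if "d \<le> N" for d
  proof -
    have "(Sop g ^^ (N - d)) ((Top g ^^ d) (Sop g Y)) z
        = (Sop g ^^ (N - d))
            (\<lambda>y. 1 * Sop g ((Top g ^^ d) Y) y + (- of_nat d) * (Top g ^^ Suc d) Y y) z"
      using word_op_cong[OF funpow_Top_Sop[OF Y Y0] z, where w = "replicate (N - d) LS"] by simp
    also have "\<dots> = (Sop g ^^ (N - d)) (Sop g ((Top g ^^ d) Y)) z - of_nat d * X (N - d) (Suc d)"
      using word_op_lincomb[OF Sop_holomorphic[OF funpow_holomorphic(3)[OF Y]]
          funpow_holomorphic(3)[OF Y] z,
          where w = "replicate (N - d) LS" and a = 1 and b = "- of_nat d"]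
      by (simp add: X_def del: funpow.simps)
    finally show ?thesis
      using that by (simp add: X_def Suc_diff_le funpow_swap1)
  qed
  have "word_op g (w @ [LS]) Y z
      = (\<Sum>d\<le>N. of_int (c d) * (X (Suc N - d) d - of_nat d * X (N - d) (Suc d)))"
    using nf[OF Sop_holomorphic[OF Y] Sop_at_0 z] commute
    by (simp add: word_op_append st_sum_def N_def c_def)
  also have "\<dots> = (\<Sum>d\<le>Suc N. of_int (c d) * X (Suc N - d) d)
      - (\<Sum>d\<le>N. of_int (int d * c d) * X (N - d) (Suc d))"
    using st_coeffs_above_length[of w "Suc N"]
    by (simp add: sum_subtractf algebra_simps N_def c_def)
  also have "\<dots> = (\<Sum>d\<le>Suc N. of_int (c d) * X (Suc N - d) d)
      - (\<Sum>d\<le>Suc N. of_int (case d of 0 \<Rightarrow> 0 | Suc e \<Rightarrow> int e * c e) * X (Suc N - d) d)"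
    by (subst (2) sum.atMost_Suc_shift) simp
  also have "\<dots> = st_sum g (Suc N) (coeffs_times c LS) Y z"
    by (simp add: st_sum_def X_def sum_subtractf left_diff_distrib)
  finally show ?thesis
    by (simp add: N_def c_def st_coeffs_snoc)
qed

lemma st_normal_form_snoc_LM:
  assumes nf: "\<And>Y y. Y holomorphic_on D \<Longrightarrow> Y 0 = 0 \<Longrightarrow> y \<in> D \<Longrightarrow>
      word_op g w Y y = st_sum g (length w) (st_coeffs w) Y y"
    and Y: "Y holomorphic_on D" and Y0: "Y 0 = 0" and z: "z \<in> D"
  shows "word_op g (w @ [LM]) Y z = st_sum g (length (w @ [LM])) (st_coeffs (w @ [LM])) Y z"
proof -
  have "word_op g (w @ [LM]) Y z = word_op g w (\<lambda>y. 1 * Sop g Y y + 1 * Top g Y y) z"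
    using word_op_cong[OF Mop_eq_Sop_add_Top[OF Y Y0] z, where w = w] by (simp add: word_op_append)
  also have "\<dots> = word_op g (w @ [LS]) Y z + word_op g (w @ [LT]) Y z"
    using word_op_lincomb[OF Sop_holomorphic[OF Y] Top_holomorphic[OF Y] z,
        where w = w and a = 1 and b = 1]
    by (simp add: word_op_append)
  also have "\<dots> = st_sum g (Suc (length w)) (coeffs_times (st_coeffs w) LS) Y z
      + st_sum g (Suc (length w)) (coeffs_times (st_coeffs w) LT) Y z"
    using st_normal_form_snoc_LS[OF nf Y Y0 z] st_normal_form_snoc_LT[OF nf Y z]
    by (simp add: st_coeffs_snoc)
  also have "\<dots> = st_sum g (length (w @ [LM])) (st_coeffs (w @ [LM])) Y z"
    by (simp only: st_sum_add coeffs_times_LM st_coeffs_snoc length_append_singleton)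
  finally show ?thesis .
qed

lemma word_op_st_normal_form:
  assumes "Y holomorphic_on D" and "Y 0 = 0" and "z \<in> D"
  shows "word_op g w Y z = st_sum g (length w) (st_coeffs w) Y z"
  using assms
proof (induction w arbitrary: Y z rule: rev_induct)
  case (snoc x w)
  then show ?case
    using st_normal_form_snoc_LM[OF snoc.IH snoc.prems]
      st_normal_form_snoc_LS[OF snoc.IH snoc.prems]
      st_normal_form_snoc_LT[OF snoc.IH snoc.prems(1,3)]
    by (cases x) simp_all
qed (simp add: st_sum_def st_coeffs_Nil)

lemma word_op_snoc_LT_st_normal_form:
  "F holomorphic_on D \<Longrightarrow> z \<in> D \<Longrightarrow>
    word_op g (w @ [LT]) F z = st_sum g (length (w @ [LT])) (st_coeffs (w @ [LT])) F z"
  using st_normal_form_snoc_LT[OF word_op_st_normal_form] .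

lemma word_op_LT_replicate_LM:
  assumes "f holomorphic_on D" and "z \<in> D"
  shows "word_op g (w @ [LT] @ replicate i LM) f z = word_op g (w @ replicate i LS @ [LT]) f z"
  using word_op_cong[OF Top_funpow_Mop[OF assms(1)] assms(2), where w = w]
  by (simp add: word_op_append)

lemma word_op_LS_replicate_LM:
  assumes f: "f holomorphic_on D" and z: "z \<in> D"
  shows "word_op g (w @ [LS] @ replicate i LM) f z
    = word_op g (w @ replicate (Suc i) LS) (Pi0 f) z
      + of_nat i * word_op g (w @ replicate i LS @ [LT]) f z"
proof -
  have "word_op g (w @ [LS] @ replicate i LM) f z
      = word_op g w (\<lambda>y. 1 * (Sop g ^^ Suc i) (Pi0 f) y + of_nat i * (Sop g ^^ i) (Top g f) y) z"
    using word_op_cong[OF Sop_funpow_Mop[OF f] z, where w = w] by (simp add: word_op_append)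
  also have "\<dots> = word_op g (w @ replicate (Suc i) LS) (Pi0 f) z
      + of_nat i * word_op g (w @ replicate i LS @ [LT]) f z"
    using word_op_lincomb[OF funpow_holomorphic(2)[OF Pi0_holomorphic[OF f], where i = "Suc i"]
        funpow_holomorphic(2)[OF Top_holomorphic[OF f], where i = i] z,
        where w = w and a = 1 and b = "of_nat i"]
    by (simp add: word_op_append)
  finally show ?thesis .
qed

lemma word_op_expansion_LT:
  assumes pat: "pat = v @ [LT] @ replicate i LM" and len: "length pat = k + n"
    and n: "count_letter LT pat = n" and f: "f holomorphic_on D" and z: "z \<in> D"
  shows "word_op g pat f z = (Sop g ^^ k) ((Top g ^^ n) f) z
    + (\<Sum>j=1..k. of_int (st_coeffs (v @ replicate i LS @ [LT]) (n + j))
        * (Sop g ^^ (k - j)) ((Top g ^^ (n + j)) f) z)"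
proof -
  let ?u = "v @ replicate i LS @ [LT]"
  have "word_op g pat f z = st_sum g (k + n) (st_coeffs ?u) f z"
    using word_op_LT_replicate_LM[OF f z, of v i]
      word_op_snoc_LT_st_normal_form[OF f z, of "v @ replicate i LS"] len
    by (simp add: pat)
  then show ?thesis
    using st_sum_split[of n "st_coeffs ?u" g k f z] st_coeffs_below_count_LT[of _ ?u]
      st_coeffs_at_count_LT[of ?u] n
    by (simp add: pat)
qed

lemma word_op_expansion_LS:
  assumes pat: "pat = v @ [LS] @ replicate i LM" and len: "length pat = k + n"
    and n: "count_letter LT pat = n" and f: "f holomorphic_on D" and z: "z \<in> D"
  shows "word_op g pat f z = (Sop g ^^ k) ((Top g ^^ n) (Pi0 f)) z
    + (\<Sum>j=1..k. of_int (int i * st_coeffs (v @ replicate i LS @ [LT]) (n + j))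
        * (Sop g ^^ (k - j)) ((Top g ^^ (n + j)) f) z)
    + (\<Sum>j=1..k. of_int (st_coeffs (v @ replicate (Suc i) LS) (n + j))
        * (Sop g ^^ (k - j)) ((Top g ^^ (n + j)) (Pi0 f)) z)"
proof -
  let ?u = "v @ replicate (Suc i) LS" and ?u' = "v @ replicate i LS @ [LT]"
  have "word_op g pat f z = st_sum g (k + n) (st_coeffs ?u) (Pi0 f) z
      + of_nat i * st_sum g (k + n) (st_coeffs ?u') f z"
    using word_op_LS_replicate_LM[OF f z, of v i]
      word_op_snoc_LT_st_normal_form[OF f z, of "v @ replicate i LS"]
      word_op_st_normal_form[OF Pi0_holomorphic[OF f] _ z, of ?u] len
    by (simp add: pat Pi0_def)
  then show ?thesis
    using st_sum_split[of n "st_coeffs ?u" g k "Pi0 f" z] st_sum_split[of n "st_coeffs ?u'" g k f z]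
      st_coeffs_below_count_LT[of _ ?u] st_coeffs_at_count_LT[of ?u]
      st_coeffs_below_count_LT[of _ ?u'] n
    by (simp add: pat sum_distrib_left mult.assoc)
qed

end

lemma integration_operators_disc: "g holomorphic_on ball 0 1 \<Longrightarrow> integration_operators (ball 0 1) g"
  by unfold_locales auto

lemma word_op_expansion:
  assumes y: "y \<noteq> LM" and pat: "pat = v @ [y] @ replicate i LM"
    and len: "length pat = k + n" and n: "count_letter LT pat = n"
  shows "\<exists>(a :: nat \<Rightarrow> int) (b :: nat \<Rightarrow> int).
    \<forall>g. g holomorphic_on ball 0 1 \<longrightarrow>
      (\<forall>f. f holomorphic_on ball 0 1 \<longrightarrow>
        (\<forall>z\<in>ball 0 1.
          word_op g pat f z =
            (if ends_in_T pat then 1 else 0) * ((Sop g ^^ k) ((Top g ^^ n) f)) z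
            + (if ends_in_S pat then 1 else 0) * ((Sop g ^^ k) ((Top g ^^ n) (Pi0 f))) z
            + (\<Sum>j=1..k. of_int (a j) * ((Sop g ^^ (k - j)) ((Top g ^^ (n + j)) f)) z)
            + (\<Sum>j=1..k. of_int (b j) * ((Sop g ^^ (k - j)) ((Top g ^^ (n + j)) (Pi0 f))) z)))"
proof (cases y)
  case LT
  have "ends_in_T pat" "\<not> ends_in_S pat"
    using ends_in_T_iff ends_in_S_iff y by (simp_all add: pat LT)
  then show ?thesis
    using integration_operators.word_op_expansion_LT[OF integration_operators_disc _ len n] pat LT
    by (intro exI[of _ "\<lambda>j. st_coeffs (v @ replicate i LS @ [LT]) (n + j)"] exI[of _ "\<lambda>j. 0"]) simp
next
  case LS
  have "\<not> ends_in_T pat" "ends_in_S pat"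
    using ends_in_T_iff ends_in_S_iff y by (simp_all add: pat LS)
  then show ?thesis
    using integration_operators.word_op_expansion_LS[OF integration_operators_disc _ len n] pat LS
    by (intro exI[of _ "\<lambda>j. int i * st_coeffs (v @ replicate i LS @ [LT]) (n + j)"]
        exI[of _ "\<lambda>j. st_coeffs (v @ replicate (Suc i) LS) (n + j)"]) (simp add: algebra_simps)
qed (use y in simp)

lemma word_op_expansion_vanishing_at_0:
  assumes y: "y \<noteq> LM" and pat: "pat = v @ [y] @ replicate i LM"
    and len: "length pat = k + n" and n: "count_letter LT pat = n"
  shows "\<exists>c :: nat \<Rightarrow> int.
    \<forall>g. g holomorphic_on ball 0 1 \<longrightarrow>
      (\<forall>f. f holomorphic_on ball 0 1 \<longrightarrow> f 0 = 0 \<longrightarrow>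
        (\<forall>z\<in>ball 0 1.
          word_op g pat f z = ((Sop g ^^ k) ((Top g ^^ n) f)) z
            + (\<Sum>j=1..k. of_int (c j) * ((Sop g ^^ (k - j)) ((Top g ^^ (n + j)) f)) z)))"
proof (cases y)
  case LT
  then show ?thesis
    using integration_operators.word_op_expansion_LT[OF integration_operators_disc _ len n] pat
    by (intro exI[of _ "\<lambda>j. st_coeffs (v @ replicate i LS @ [LT]) (n + j)"]) simp
next
  case LS
  have "Pi0 f = f" if "f 0 = 0" for f :: "complex \<Rightarrow> complex"
    using that by (simp add: Pi0_def)
  then show ?thesis
    using integration_operators.word_op_expansion_LS[OF integration_operators_disc _ len n] pat LS
    by (intro exI[of _ "\<lambda>j. int i * st_coeffs (v @ replicate i LS @ [LT]) (n + j)
        + st_coeffs (v @ replicate (Suc i) LS) (n + j)"]) (simp add: distrib_right sum.distrib)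
qed (use y in simp)

theorem theorem3p1:
  fixes l m n k :: nat and pat :: "letter list"
  assumes "m + n \<ge> 1" and "k = l + m" and "k \<ge> 1"
    and "count_letter LM pat = l" and "count_letter LS pat = m" and "count_letter LT pat = n"
  shows "\<exists>(a :: nat \<Rightarrow> int) (b :: nat \<Rightarrow> int).
           \<forall>g. g holomorphic_on ball 0 1 \<longrightarrow>
             (\<forall>f. f holomorphic_on ball 0 1 \<longrightarrow>
               (\<forall>z\<in>ball 0 1.
                 word_op g pat f z =
                   (if ends_in_T pat then 1 else 0) * ((Sop g ^^ k) ((Top g ^^ n) f)) z
                   + (if ends_in_S pat then 1 else 0) * ((Sop g ^^ k) ((Top g ^^ n) (Pi0 f))) z
                   + (\<Sum>j=1..k. of_int (a j) * ((Sop g ^^ (k - j)) ((Top g ^^ (n + j)) f)) z)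
                   + (\<Sum>j=1..k. of_int (b j) * ((Sop g ^^ (k - j)) ((Top g ^^ (n + j)) (Pi0 f))) z))) \<and>
         (\<exists>(c :: nat \<Rightarrow> int).
           \<forall>g. g holomorphic_on ball 0 1 \<longrightarrow>
             (\<forall>f. f holomorphic_on ball 0 1 \<longrightarrow> f 0 = 0 \<longrightarrow>
               (\<forall>z\<in>ball 0 1.
                 word_op g pat f z =
                   ((Sop g ^^ k) ((Top g ^^ n) f)) z
                   + (\<Sum>j=1..k. of_int (c j) * ((Sop g ^^ (k - j)) ((Top g ^^ (n + j)) f)) z))))"
proof -
  have "count_letter LS pat \<noteq> 0 \<or> count_letter LT pat \<noteq> 0"
    using assms(1,5,6) by linarith
  then obtain x where "x \<in> set pat" and "x \<noteq> LM"
    by (auto simp: count_letter_eq_0_iff)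
  then obtain v y i where y: "y \<noteq> LM" and pat: "pat = v @ [y] @ replicate i LM"
    by (rule split_last_non_LM)
  have len: "length pat = k + n"
    using length_eq_count_letters[of pat] assms(2,4-6) by simp
  show ?thesis
    using word_op_expansion[OF y pat len assms(6)]
      word_op_expansion_vanishing_at_0[OF y pat len assms(6)]
    by auto
qed

end
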